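(* The Zorn vector matrix algebra $\mathfrak{Z}(\mathbb{Q})$ over $\mathbb{Q}$ does not have the hyperbolic property.
   Context: $\mathfrak{Z}(R)$ is the set of matrices $\begin{pmatrix}a&v\\ w&b\end{pmatrix}$ with $a,b\in R$, $v,w\in R^3$, with entrywise addition and product $\begin{pmatrix}a&v\\ w&b\end{pmatrix}\begin{pmatrix}a'&v'\\ w'&b'\end{pmatrix}=\begin{pmatrix}aa'+v\cdot w' & av'+b'v-w\times w'\\ a'w+bw'+v\times v' & bb'+w\cdot v'\end{pmatrix}$ (dot and cross products in $R^3$). A $\mathbb{Z}$-order of a finite-dimensional $\mathbb{Q}$-algebra is a unital subring finitely generated as a $\mathbb{Z}$-module spanning the algebra over $\mathbb{Q}$; its units form a loop. The algebra has the hyperbolic property if some $\mathbb{Z}$-order has a unit loop containing no subgroup isomorphic to $\mathbb{Z}^2$. *)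

theory Defs
  imports Complex_Main "HOL-Library.Product_Plus"
begin

text \<open>Vectors of Q^3 as triples; the Zorn vector matrix algebra Z(Q) as quadruples
  (a, v, w, b) standing for the matrix with rows (a, v) and (w, b).\<close>

type_synonym vec3 = "rat \<times> rat \<times> rat"
type_synonym zorn = "rat \<times> vec3 \<times> vec3 \<times> rat"

fun dot3 :: "vec3 \<Rightarrow> vec3 \<Rightarrow> rat" where
  "dot3 (v1, v2, v3) (w1, w2, w3) = v1 * w1 + v2 * w2 + v3 * w3"

fun cross3 :: "vec3 \<Rightarrow> vec3 \<Rightarrow> vec3" where
  "cross3 (v1, v2, v3) (w1, w2, w3) = (v2 * w3 - v3 * w2, v3 * w1 - v1 * w3, v1 * w2 - v2 * w1)"

fun sc3 :: "rat \<Rightarrow> vec3 \<Rightarrow> vec3" where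
  "sc3 c (v1, v2, v3) = (c * v1, c * v2, c * v3)"

text \<open>Addition on zorn is the componentwise one from Product_Plus.\<close>

fun zmult :: "zorn \<Rightarrow> zorn \<Rightarrow> zorn" where
  "zmult (a, v, w, b) (a', v', w', b') =
     (a * a' + dot3 v w',
      sc3 a v' + sc3 b' v - cross3 w w',
      sc3 a' w + sc3 b w' + cross3 v v',
      b * b' + dot3 w v')"

definition zone :: zorn where
  "zone = (1, (0, 0, 0), (0, 0, 0), 1)"

fun zscale :: "rat \<Rightarrow> zorn \<Rightarrow> zorn" where
  "zscale c (a, v, w, b) = (c * a, sc3 c v, sc3 c w, c * b)"

definition Z_order :: "zorn set \<Rightarrow> bool" where
  "Z_order R \<longleftrightarrow>
     zone \<in> R \<and>
     (\<forall>x\<in>R. \<forall>y\<in>R. x - y \<in> R \<and> zmult x y \<in> R) \<and>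
     (\<exists>S. finite S \<and> S \<subseteq> R \<and>
          R = {\<Sum>s\<in>S. zscale (of_int (k s)) s | k. True}) \<and>
     (\<forall>x. \<exists>S c. finite S \<and> S \<subseteq> R \<and> x = (\<Sum>s\<in>S. zscale (c s) s))"

definition zunits :: "zorn set \<Rightarrow> zorn set" where
  "zunits R = {x \<in> R. \<exists>y\<in>R. zmult x y = zone \<and> zmult y x = zone}"

text \<open>The unit loop of R contains a subgroup isomorphic to Z^2, i.e. there is an injective
  homomorphism from Z^2 into the unit loop (its image is such a subgroup).\<close>

definition contains_Z2 :: "zorn set \<Rightarrow> bool" where
  "contains_Z2 U \<longleftrightarrow>
     (\<exists>\<phi> :: int \<times> int \<Rightarrow> zorn. inj \<phi> \<and> range \<phi> \<subseteq> U \<and>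
        (\<forall>p q. \<phi> (p + q) = zmult (\<phi> p) (\<phi> q)))"

definition hyperbolic_property :: bool where
  "hyperbolic_property \<longleftrightarrow> (\<exists>R. Z_order R \<and> \<not> contains_Z2 (zunits R))"

end

theory Submission
  imports Defs
begin

text \<open>Every \<open>\<int>\<close>-order contains a nonzero integer multiple of each element of \<open>\<Zfrak>(\<rat>)\<close>, in
  particular of the element \<open>e\<close> with \<open>v = (1,0,0)\<close> and of \<open>f\<close> with \<open>w = (0,1,0)\<close>. The
  unipotent elements \<open>1 + s e + t f\<close> multiply by adding \<open>(s,t)\<close>, since every dot and cross
  product between the vectors \<open>(s,0,0)\<close> and \<open>(0,t,0)\<close> that occurs in the product vanishes.
  So \<open>(p,q) \<mapsto> 1 + p D e + q D' f\<close> embeds \<open>\<int>\<^sup>2\<close> into the unit loop of the order.\<close>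

lemma zscale_add_left: "zscale (a + b) x = zscale a x + zscale b x"
  by (cases x) (auto simp: algebra_simps)

lemma zscale_diff_left: "zscale (a - b) x = zscale a x - zscale b x"
  by (cases x) (auto simp: algebra_simps)

lemma zscale_add_right: "zscale c (x + y) = zscale c x + zscale c y"
  by (cases x; cases y) (auto simp: algebra_simps)

lemma zscale_zero_left: "zscale 0 x = 0"
  by (cases x) (auto simp: zero_prod_def)

lemma zscale_one_left: "zscale 1 x = x"
  by (cases x) auto

lemma zscale_zscale: "zscale a (zscale b x) = zscale (a * b) x"
  by (cases x) (auto simp: algebra_simps)

lemma zscale_sum: "zscale c (\<Sum>s\<in>S. f s) = (\<Sum>s\<in>S. zscale c (f s))"
  by (induction S rule: infinite_finite_induct) (simp_all add: zscale_add_right zero_prod_def)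

lemma common_denominator:
  fixes c :: "'a \<Rightarrow> rat"
  assumes "finite S"
  shows "\<exists>D::int. D > 0 \<and> (\<forall>s\<in>S. of_int D * c s \<in> \<int>)"
proof (intro exI conjI ballI)
  define den where "den s = snd (quotient_of (c s))" for s
  show "(\<Prod>s\<in>S. den s) > 0"
    by (simp add: prod_pos den_def quotient_of_denom_pos')
  fix s assume "s \<in> S"
  then obtain m where m: "(\<Prod>s\<in>S. den s) = den s * m"
    using assms by (meson dvd_prodI dvdE)
  obtain a b where ab: "quotient_of (c s) = (a, b)" by fastforce
  have "b > 0" using quotient_of_denom_pos[OF ab] .
  moreover have "den s = b" by (simp add: den_def ab)
  ultimately have "of_int (\<Prod>s\<in>S. den s) * c s = of_int (a * m)"
    by (simp add: m quotient_of_div[OF ab])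
  then show "of_int (\<Prod>s\<in>S. den s) * c s \<in> \<int>" by simp
qed

context
  fixes R :: "zorn set"
  assumes zero_mem: "0 \<in> R"
    and diff_mem: "\<And>x y. x \<in> R \<Longrightarrow> y \<in> R \<Longrightarrow> x - y \<in> R"
begin

lemma subgroup_add_mem:
  assumes "x \<in> R" "y \<in> R"
  shows "x + y \<in> R"
  using diff_mem[OF assms(1) diff_mem[OF zero_mem assms(2)]] by simp

lemma subgroup_zscale_int_mem:
  assumes "x \<in> R"
  shows "zscale (of_int k) x \<in> R"
proof (induction k rule: int_induct[where k = 0])
  case base
  show ?case using zero_mem by (simp add: zscale_zero_left)
next
  case (step1 i)
  then show ?case using subgroup_add_mem[OF _ assms] by (simp add: zscale_add_left zscale_one_left)
next
  case (step2 i)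
  then show ?case using diff_mem[OF _ assms] by (simp add: zscale_diff_left zscale_one_left)
qed

lemma subgroup_sum_mem: "finite S \<Longrightarrow> (\<And>s. s \<in> S \<Longrightarrow> f s \<in> R) \<Longrightarrow> (\<Sum>s\<in>S. f s) \<in> R"
  by (induction S rule: finite_induct) (simp_all add: zero_mem subgroup_add_mem)

end

lemma Z_order_one_mem: "Z_order R \<Longrightarrow> zone \<in> R"
  unfolding Z_order_def by blast

lemma Z_order_diff_mem: "Z_order R \<Longrightarrow> x \<in> R \<Longrightarrow> y \<in> R \<Longrightarrow> x - y \<in> R"
  unfolding Z_order_def by blast

lemma Z_order_zero_mem: "Z_order R \<Longrightarrow> 0 \<in> R"
  using Z_order_diff_mem[OF _ Z_order_one_mem Z_order_one_mem] by simp

lemma Z_order_multiple_mem: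
  assumes "Z_order R"
  shows "\<exists>D::int. D \<noteq> 0 \<and> zscale (of_int D) x \<in> R"
proof -
  note subgroup = Z_order_zero_mem[OF assms] Z_order_diff_mem[OF assms]
  obtain S c where S: "finite S" "S \<subseteq> R" and x: "x = (\<Sum>s\<in>S. zscale (c s) s)"
    using assms unfolding Z_order_def by blast
  obtain D :: int where "D > 0" and D: "\<forall>s\<in>S. of_int D * c s \<in> \<int>"
    using common_denominator[OF S(1)] by blast
  have "zscale (of_int D) x = (\<Sum>s\<in>S. zscale (of_int D * c s) s)"
    by (simp add: x zscale_sum zscale_zscale)
  also have "\<dots> \<in> R"
  proof (rule subgroup_sum_mem[OF subgroup S(1)])
    fix s assume "s \<in> S"
    then obtain k where "of_int D * c s = of_int k" using D Ints_cases by metis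
    moreover have "zscale (of_int k) s \<in> R"
      using subgroup_zscale_int_mem[OF subgroup] \<open>s \<in> S\<close> S(2) by blast
    ultimately show "zscale (of_int D * c s) s \<in> R" by simp
  qed
  finally show ?thesis using \<open>D > 0\<close> by (intro exI[of _ D]) simp
qed

definition zunipotent :: "rat \<Rightarrow> rat \<Rightarrow> zorn" where
  "zunipotent s t = (1, (s, 0, 0), (0, t, 0), 1)"

lemma zmult_zunipotent:
  "zmult (zunipotent s t) (zunipotent s' t') = zunipotent (s + s') (t + t')"
  by (simp add: zunipotent_def zero_prod_def)

lemma zunipotent_zero: "zunipotent 0 0 = zone"
  by (simp add: zunipotent_def zone_def)

lemma zunipotent_eq_iff: "zunipotent s t = zunipotent s' t' \<longleftrightarrow> s = s' \<and> t = t'"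
  by (simp add: zunipotent_def)

lemma zunipotent_decompose:
  "zone + zscale (of_int p) (zscale (of_int D) (0, (1, 0, 0), (0, 0, 0), 0))
        + zscale (of_int q) (zscale (of_int D') (0, (0, 0, 0), (0, 1, 0), 0))
     = zunipotent (of_int (p * D)) (of_int (q * D'))"
  unfolding zunipotent_def zone_def by simp

lemma hom_into_zunits:
  fixes \<phi> :: "'a::group_add \<Rightarrow> zorn"
  assumes "range \<phi> \<subseteq> R" "\<And>p q. \<phi> (p + q) = zmult (\<phi> p) (\<phi> q)" "\<phi> 0 = zone"
  shows "range \<phi> \<subseteq> zunits R"
proof (rule image_subsetI)
  fix p
  have "zmult (\<phi> p) (\<phi> (- p)) = \<phi> (p + - p)" "zmult (\<phi> (- p)) (\<phi> p) = \<phi> (- p + p)"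
    using assms(2)[of p "- p"] assms(2)[of "- p" p] by simp_all
  then have "zmult (\<phi> p) (\<phi> (- p)) = zone" "zmult (\<phi> (- p)) (\<phi> p) = zone"
    using assms(3) by simp_all
  then show "\<phi> p \<in> zunits R" using assms(1) unfolding zunits_def by blast
qed

lemma Z_order_zunits_contains_Z2:
  assumes "Z_order R"
  shows "contains_Z2 (zunits R)"
proof -
  note subgroup = Z_order_zero_mem[OF assms] Z_order_diff_mem[OF assms]
  obtain D where "D \<noteq> 0" and D: "zscale (of_int D) (0, (1, 0, 0), (0, 0, 0), 0) \<in> R"
    using Z_order_multiple_mem[OF assms] by blast
  obtain D' where "D' \<noteq> 0" and D': "zscale (of_int D') (0, (0, 0, 0), (0, 1, 0), 0) \<in> R"
    using Z_order_multiple_mem[OF assms] by blast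
  define \<phi> where "\<phi> pq = zunipotent (of_int (fst pq * D)) (of_int (snd pq * D'))" for pq
  have hom: "\<phi> (p + q) = zmult (\<phi> p) (\<phi> q)" for p q
    by (simp add: \<phi>_def zmult_zunipotent distrib_right)
  have "range \<phi> \<subseteq> R"
  proof (rule image_subsetI)
    fix pq :: "int \<times> int"
    show "\<phi> pq \<in> R"
      unfolding \<phi>_def zunipotent_decompose[symmetric]
      by (intro subgroup_add_mem[OF subgroup] subgroup_zscale_int_mem[OF subgroup]
          D D' Z_order_one_mem[OF assms])
  qed
  then have "range \<phi> \<subseteq> zunits R"
    using hom by (rule hom_into_zunits) (simp add: \<phi>_def zunipotent_zero)
  moreover have "inj \<phi>"
  proof (rule injI)
    fix pq pq' assume "\<phi> pq = \<phi> pq'"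
    then have "fst pq * D = fst pq' * D" "snd pq * D' = snd pq' * D'"
      by (simp_all add: \<phi>_def zunipotent_eq_iff)
    then show "pq = pq'" using \<open>D \<noteq> 0\<close> \<open>D' \<noteq> 0\<close> by (simp add: prod_eq_iff)
  qed
  ultimately show ?thesis unfolding contains_Z2_def using hom by blast
qed

theorem proposition3p2:
  shows "\<not> hyperbolic_property"
  unfolding hyperbolic_property_def using Z_order_zunits_contains_Z2 by blast

end
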